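(* Let $\mathcal{U}\subseteq\mathbb{R}^2$ be open, $P,Q\in\mathcal{C}^1(\mathcal{U})$, $\mathbf{F}=(P,Q)$, and let $\Phi_t$ be the flow of $\dot x=P$, $\dot y=Q$. Let $\gamma(t)$ be a periodic orbit of minimal period $T>0$. Let $f:\mathcal{U}\to\mathbb{R}$ be a non-locally-null $\mathcal{C}^1$ function and $k\in\mathcal{C}^1(\mathcal{U})$ with $P\,\partial f/\partial x+Q\,\partial f/\partial y=kf$ on $\mathcal{U}$, and $\gamma\subseteq\{f=0\}$. Take any $p_0\in\gamma$ and let $\mathcal{P}$ be the Poincaré map of $\gamma$ at $p_0$. Then \[ \nabla f(p_0)\cdot D\mathcal{P}(p_0)=\exp\left(\int_0^T k(\gamma(t))\,dt\right)\nabla f(p_0), \] where $\nabla f(p_0)$ is regarded as a row vector multiplying the $2\times 2$ Jacobian matrix $D\mathcal{P}(p_0)$.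
   Context: Poincaré map: let $\mathcal{U}_\gamma\subseteq\mathcal{U}$ be a neighborhood of $\gamma$ with no singular points and $\Sigma=\{q\in\mathcal{U}_\gamma:(q-p_0)\cdot\mathbf{F}(p_0)=0\}$. There is $\delta>0$ and a unique $\mathcal{C}^1$ function $\tau$ defined for $q$ in $\mathcal{B}_\delta(p_0)$ (the ball of radius $\delta$ about $p_0$) with $\tau(p_0)=T$ and $\Phi_{\tau(q)}(q)\in\Sigma$; the Poincaré map is $\mathcal{P}(q)=\Phi_{\tau(q)}(q)$, viewed as a map into $\mathbb{R}^2$, and $D\mathcal{P}(p_0)$ is its $2\times 2$ Jacobian matrix at $p_0$. *)

theory Defs
  imports "HOL-Analysis.Analysis"
begin

text \<open>Planar points are elements of real^2; components x = p$1, y = p$2.\<close>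

definition C1_on :: "(real^2) set \<Rightarrow> (real^2 \<Rightarrow> 'b::real_normed_vector) \<Rightarrow> bool" where
  "C1_on S g \<longleftrightarrow> (\<exists>g'. (\<forall>x\<in>S. (g has_derivative blinfun_apply (g' x)) (at x)) \<and> continuous_on S g')"

definition vfield :: "(real^2 \<Rightarrow> real) \<Rightarrow> (real^2 \<Rightarrow> real) \<Rightarrow> real^2 \<Rightarrow> real^2" where
  "vfield P Q p = (\<chi> i. if i = 1 then P p else Q p)"

definition partial :: "2 \<Rightarrow> (real^2 \<Rightarrow> real) \<Rightarrow> real^2 \<Rightarrow> real" where
  "partial i f p = frechet_derivative f (at p) (axis i 1)"

definition grad :: "(real^2 \<Rightarrow> real) \<Rightarrow> real^2 \<Rightarrow> real^2" where
  "grad f p = (\<chi> i. partial i f p)"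

definition ode_sol :: "(real^2) set \<Rightarrow> (real^2 \<Rightarrow> real^2) \<Rightarrow> (real \<Rightarrow> real^2) \<Rightarrow> real set \<Rightarrow> bool" where
  "ode_sol U F phi I \<longleftrightarrow> is_interval I \<and>
     (\<forall>s\<in>I. phi s \<in> U \<and> (phi has_vector_derivative F (phi s)) (at s within I))"

definition flow_defined :: "(real^2) set \<Rightarrow> (real^2 \<Rightarrow> real^2) \<Rightarrow> real \<Rightarrow> real^2 \<Rightarrow> bool" where
  "flow_defined U F t q \<longleftrightarrow> (\<exists>phi I. 0 \<in> I \<and> t \<in> I \<and> ode_sol U F phi I \<and> phi 0 = q)"

text \<open>The flow Phi_t(q) (well defined by uniqueness of solutions for C^1 fields).\<close>
definition flow :: "(real^2) set \<Rightarrow> (real^2 \<Rightarrow> real^2) \<Rightarrow> real \<Rightarrow> real^2 \<Rightarrow> real^2" where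
  "flow U F t q = (THE y. \<exists>phi I. 0 \<in> I \<and> t \<in> I \<and> ode_sol U F phi I \<and> phi 0 = q \<and> phi t = y)"

definition non_locally_null :: "(real^2) set \<Rightarrow> (real^2 \<Rightarrow> real) \<Rightarrow> bool" where
  "non_locally_null U f \<longleftrightarrow> (\<forall>V. open V \<and> V \<noteq> {} \<and> V \<subseteq> U \<longrightarrow> (\<exists>x\<in>V. f x \<noteq> 0))"

end

theory Submission
  imports Defs
begin

text \<open>
  Let \<open>y\<close> be the periodic orbit started at \<open>p0\<close> and \<open>\<kappa> s = \<integral>\<^sub>0\<^sup>s k (y \<sigma>) d\<sigma>\<close>. Along every
  solution \<open>\<phi>\<close> the cofactor relation \<open>Df (F x) = k x * f x\<close> turns \<open>f \<circ> \<phi>\<close> into a solution of the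
  scalar linear equation \<open>g' = k (\<phi> s) * g\<close>. Solutions starting at \<open>q\<close> near \<open>p0\<close> stay uniformly
  close to \<open>y\<close>, so a Gronwall comparison with \<open>f q * exp (\<kappa> s)\<close> gives
  \<open>f (P q) = exp (\<kappa> (\<tau> q)) * f q + o(\<bar>f q\<bar>)\<close>. Since \<open>f p0 = 0\<close>, \<open>f q = O(\<bar>q - p0\<bar>)\<close>, hence
  \<open>f \<circ> P\<close> has derivative \<open>exp (\<kappa> T) * Df p0\<close> at \<open>p0\<close>, and the chain rule yields
  \<open>Df p0 \<circ> DP p0 = exp (\<kappa> T) * Df p0\<close>, which is the claim written with gradients and Jacobians.

  Differentiability of \<open>P\<close> comes from the linearisation of the flow along \<open>y\<close>:
  \<open>P q = y (\<tau> q) + M T (q - p0) + o(\<bar>q - p0\<bar>)\<close>, where \<open>M' = DF (y s) \<circ> M\<close> and \<open>M 0 = id\<close>. In the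
  plane \<open>M\<close> is built explicitly from the solution \<open>F \<circ> y\<close> of this variational equation and a second
  solution found by variation of constants in the frame \<open>(F \<circ> y, rot90 (F \<circ> y))\<close>. Finally,
  \<open>\<kappa> T\<close> does not depend on the point of the orbit chosen as \<open>p0\<close>, by periodicity.
\<close>

section \<open>Gronwall estimates and first-order contact\<close>

lemma has_real_derivative_smoothed_norm:
  fixes u :: "real \<Rightarrow> 'a::real_inner"
  assumes u: "(u has_vector_derivative u') (at t within S)" and d: "d > 0"
  shows "((\<lambda>s. sqrt (u s \<bullet> u s + d\<^sup>2)) has_real_derivative (u t \<bullet> u') / sqrt (u t \<bullet> u t + d\<^sup>2))
           (at t within S)"
proof -
  have pos: "u t \<bullet> u t + d\<^sup>2 > 0"
    using d by (simp add: add_nonneg_pos)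
  have "((\<lambda>s. u s \<bullet> u s + d\<^sup>2) has_real_derivative 2 * (u t \<bullet> u')) (at t within S)"
    using u unfolding has_real_derivative_iff_has_vector_derivative
    by (auto intro!: derivative_eq_intros simp: has_vector_derivative_def inner_commute)
  from DERIV_chain2[OF DERIV_real_sqrt[OF pos] this] show ?thesis
    using pos by (simp add: field_simps real_sqrt_gt_zero)
qed

lemma gronwall_norm_bound:
  fixes u u' :: "real \<Rightarrow> 'a::real_inner"
  assumes der: "\<And>t. t \<in> {0..S} \<Longrightarrow> (u has_vector_derivative u' t) (at t within {0..S})"
    and bnd: "\<And>t. t \<in> {0..S} \<Longrightarrow> norm (u' t) \<le> L * norm (u t) + c"
    and L: "0 \<le> L" and c: "0 \<le> c" and t: "t \<in> {0..S}"
  shows "norm (u t) \<le> (norm (u 0) + c * t) * exp (L * t)"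
proof (rule field_le_epsilon)
  fix d :: real assume "d > 0"
  then have d: "d / exp (L * t) > 0" by simp
  define W where "W s = sqrt (u s \<bullet> u s + (d / exp (L * t))\<^sup>2)" for s
  have W_pos: "W s > 0" for s
    unfolding W_def using d by (intro real_sqrt_gt_zero add_nonneg_pos) auto
  have norm_le_W: "norm (u s) \<le> W s" for s
    unfolding W_def norm_eq_sqrt_inner by (simp add: real_sqrt_le_mono)
  have W0: "W 0 \<le> norm (u 0) + d / exp (L * t)"
    unfolding W_def using d \<open>d > 0\<close>
    by (intro real_le_lsqrt) (auto simp: dot_square_norm power2_eq_square algebra_simps)
  \<comment> \<open>unlike the norm, \<open>W\<close> is differentiable also where \<open>u\<close> vanishes;
    \<open>W s * exp (- L s) - c s\<close> is non-increasing\<close>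
  define g where "g s = W s * exp (- (L * s)) - c * s" for s
  define g' where "g' s = ((u s \<bullet> u' s) / W s - L * W s) * exp (- (L * s)) - c" for s
  have g_deriv: "(g has_real_derivative g' s) (at s within {0..t})" if s: "s \<in> {0..t}" for s
  proof -
    have "(u has_vector_derivative u' s) (at s within {0..t})"
      using der[of s] s t by (auto intro: has_vector_derivative_within_subset)
    from has_real_derivative_smoothed_norm[OF this d] show ?thesis
      unfolding g_def g'_def W_def[symmetric]
      by (auto intro!: derivative_eq_intros simp: algebra_simps)
  qed
  have g'_nonpos: "g' s \<le> 0" if s: "s \<in> {0..t}" for s
  proof -
    have "u s \<bullet> u' s \<le> norm (u s) * (L * norm (u s) + c)"
      using norm_cauchy_schwarz[of "u s" "u' s"] bnd[of s] s t
      by (smt (verit, best) atLeastAtMost_iff mult_left_mono norm_ge_zero)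
    also have "\<dots> \<le> W s * (L * W s + c)"
      using norm_le_W[of s] W_pos[of s] L c by (intro mult_mono add_mono mult_left_mono) auto
    finally have "(u s \<bullet> u' s) / W s - L * W s \<le> c"
      using W_pos[of s] by (simp add: field_simps)
    moreover have "exp (- (L * s)) \<le> 1"
      using L s by auto
    ultimately show ?thesis
      unfolding g'_def using c by (smt (verit) exp_gt_zero mult_left_le mult_right_mono)
  qed
  obtain x where x: "x \<in> {0..t}" "g t - g 0 = g' x * t"
    using mvt_very_simple[of 0 t g "\<lambda>s. (*) (g' s)"] g_deriv t
    by (auto simp: has_field_derivative_def)
  then have "g t \<le> g 0"
    using g'_nonpos[OF x(1)] x by (smt (verit) atLeastAtMost_iff mult_nonpos_nonneg)
  then have "W t \<le> (W 0 + c * t) * exp (L * t)"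
    unfolding g_def by (simp add: exp_minus field_simps)
  also have "\<dots> \<le> (norm (u 0) + d / exp (L * t) + c * t) * exp (L * t)"
    using W0 by (intro mult_right_mono) auto
  finally show "norm (u t) \<le> (norm (u 0) + c * t) * exp (L * t) + d"
    using norm_le_W[of t] by (simp add: algebra_simps)
qed

lemma continuous_bootstrap_less:
  fixes g :: "real \<Rightarrow> real"
  assumes cont: "continuous_on {0..S} g" and g0: "g 0 < r"
    and step: "\<And>s. s \<in> {0..S} \<Longrightarrow> \<forall>x\<in>{0..s}. g x \<le> r \<Longrightarrow> g s < r"
  shows "\<forall>s\<in>{0..S}. g s < r"
proof (rule ccontr)
  define Z where "Z = {0..S} \<inter> g -` {r..}"
  assume "\<not> ?thesis"
  then have "Z \<noteq> {}"
    unfolding Z_def by force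
  moreover have "closed Z"
    unfolding Z_def by (intro continuous_closed_preimage cont) auto
  moreover have "bdd_below Z"
    unfolding Z_def by (auto intro: bdd_belowI[of _ 0])
  ultimately have s1: "Inf Z \<in> Z" and first: "\<And>x. x \<in> Z \<Longrightarrow> Inf Z \<le> x"
    by (auto intro: closed_contains_Inf cInf_lower)
  \<comment> \<open>at the first time \<open>Inf Z\<close> where \<open>g \<ge> r\<close>, the intermediate value theorem forces \<open>g = r\<close>\<close>
  obtain z where z: "0 \<le> z" "z \<le> Inf Z" "g z = r"
    using IVT'[of g 0 r "Inf Z"] g0 s1 continuous_on_subset[OF cont, of "{0..Inf Z}"]
    unfolding Z_def by auto
  then have "z = Inf Z"
    using first[of z] s1 unfolding Z_def by auto
  moreover have "g x \<le> r" if "x \<in> {0..Inf Z}" for x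
    using first[of x] that s1 z \<open>z = Inf Z\<close> unfolding Z_def by force
  ultimately have "g (Inf Z) < r"
    using step s1 unfolding Z_def by blast
  then show False
    using s1 unfolding Z_def by auto
qed

lemma has_derivative_first_order_contact:
  assumes g: "(g has_derivative g') (at x)" and fx: "f x = g x"
    and small: "\<And>\<epsilon>. \<epsilon> > 0 \<Longrightarrow> \<forall>\<^sub>F q in at x. norm (f q - g q) \<le> \<epsilon> * norm (q - x)"
  shows "(f has_derivative g') (at x)"
proof -
  have "((\<lambda>q. f q - g q) has_derivative (\<lambda>_. 0)) (at x)"
    unfolding has_derivative_iff_norm
  proof (intro conjI bounded_linear_zero tendstoI)
    fix e :: real assume "e > 0"
    then have "\<forall>\<^sub>F q in at x. q \<noteq> x \<and> norm (f q - g q) \<le> e / 2 * norm (q - x)"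
      using small[of "e / 2"] by (auto simp: eventually_at_filter elim: eventually_mono)
    then show "\<forall>\<^sub>F q in at x. dist (norm (f q - g q - (f x - g x) - 0) / norm (q - x)) 0 < e"
    proof (rule eventually_mono)
      fix q assume q: "q \<noteq> x \<and> norm (f q - g q) \<le> e / 2 * norm (q - x)"
      then have "0 < e * norm (q - x)"
        using \<open>e > 0\<close> by simp
      with q fx show "dist (norm (f q - g q - (f x - g x) - 0) / norm (q - x)) 0 < e"
        by (simp add: pos_divide_less_eq)
    qed
  qed
  from has_derivative_add[OF this g] show ?thesis
    by simp
qed

lemma has_derivative_increment_bound:
  assumes "(f has_derivative f') (at x)"
  obtains C where "C > 0" "\<forall>\<^sub>F q in nhds x. norm (f q - f x) \<le> C * norm (q - x)"
proof -
  obtain K where K: "K > 0" "\<And>h. norm (f' h) \<le> norm h * K"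
    using bounded_linear.pos_bounded[OF has_derivative_bounded_linear[OF assms]] by blast
  obtain d where d: "d > 0" "\<And>q. norm (q - x) < d \<Longrightarrow> norm (f q - f x - f' (q - x)) \<le> 1 * norm (q - x)"
    using assms unfolding has_derivative_at_alt by (meson zero_less_one)
  have "\<forall>\<^sub>F q in nhds x. norm (f q - f x) \<le> (K + 1) * norm (q - x)"
    unfolding eventually_nhds_metric dist_norm
  proof (intro exI[of _ d] conjI allI impI)
    fix q assume "norm (q - x) < d"
    then have "norm (f q - f x - f' (q - x)) \<le> norm (q - x)"
      using d by simp
    then show "norm (f q - f x) \<le> (K + 1) * norm (q - x)"
      using K(2)[of "q - x"] norm_triangle_ineq4[of "f q - f x - f' (q - x)" "- f' (q - x)"]
      by (simp add: algebra_simps)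
  qed (fact d(1))
  with K show ?thesis
    using that[of "K + 1"] by simp
qed

lemma has_derivative_scaleR_vanishing:
  fixes X :: "'a::real_normed_vector \<Rightarrow> real"
  assumes f: "(f has_derivative f') (at x)" "f x = 0" and X: "continuous (at x) X"
  shows "((\<lambda>q. X q *\<^sub>R f q) has_derivative (\<lambda>h. X x *\<^sub>R f' h)) (at x)"
proof (rule has_derivative_first_order_contact)
  show "((\<lambda>q. X x *\<^sub>R f q) has_derivative (\<lambda>h. X x *\<^sub>R f' h)) (at x)"
    by (intro derivative_intros f)
  fix \<epsilon> :: real assume "\<epsilon> > 0"
  obtain C where C: "C > 0" "\<forall>\<^sub>F q in nhds x. norm (f q) \<le> C * norm (q - x)"
    using has_derivative_increment_bound[OF f(1)] f(2) by auto
  have "\<forall>\<^sub>F q in at x. \<bar>X q - X x\<bar> < \<epsilon> / C"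
    using X \<open>\<epsilon> > 0\<close> C(1) unfolding continuous_at tendsto_iff dist_real_def by simp
  moreover have "\<forall>\<^sub>F q in at x. norm (f q) \<le> C * norm (q - x)"
    using C(2) eventually_nhds_conv_at by blast
  ultimately show "\<forall>\<^sub>F q in at x. norm (X q *\<^sub>R f q - X x *\<^sub>R f q) \<le> \<epsilon> * norm (q - x)"
  proof eventually_elim
    case (elim q)
    have "norm (X q *\<^sub>R f q - X x *\<^sub>R f q) = \<bar>X q - X x\<bar> * norm (f q)"
      by (simp flip: scaleR_diff_left)
    also have "\<dots> \<le> \<epsilon> / C * (C * norm (q - x))"
      using elim by (intro mult_mono) auto
    finally show ?case
      using C(1) by simp
  qed
qed (use f in simp)

lemma compact_thickening:
  fixes C U :: "'a::euclidean_space set"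
  assumes "compact C" "open U" "C \<subseteq> U"
  obtains r K where "r > 0" "compact K" "K \<subseteq> U" "\<And>x. x \<in> C \<Longrightarrow> cball x r \<subseteq> K"
proof -
  obtain r where r: "r > 0" "(\<Union>x\<in>C. cball x r) \<subseteq> U"
    using compact_subset_open_imp_cball_epsilon_subset[OF assms] by blast
  define K where "K = {x + z |x z. x \<in> C \<and> z \<in> cball 0 r}"
  have "compact K"
    unfolding K_def by (rule compact_sums[OF assms(1)]) simp
  moreover have "K = (\<Union>x\<in>C. cball x r)"
  proof
    show "K \<subseteq> (\<Union>x\<in>C. cball x r)"
      unfolding K_def by (auto simp: dist_norm)
    show "(\<Union>x\<in>C. cball x r) \<subseteq> K"
    proof
      fix a assume "a \<in> (\<Union>x\<in>C. cball x r)"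
      then obtain x where "x \<in> C" "a - x \<in> cball 0 r"
        by (auto simp: dist_norm norm_minus_commute)
      moreover have "a = x + (a - x)"
        by simp
      ultimately show "a \<in> K"
        unfolding K_def by blast
    qed
  qed
  ultimately show ?thesis
    using that r by blast
qed

lemma continuous_on_bounded_near_compact:
  fixes g :: "'a::euclidean_space \<Rightarrow> 'b::real_normed_vector"
  assumes "compact C" "open U" "C \<subseteq> U" "continuous_on U g"
  obtains r B where "r > 0" "B \<ge> 0" "\<And>x a. x \<in> C \<Longrightarrow> a \<in> cball x r \<Longrightarrow> a \<in> U \<and> norm (g a) \<le> B"
proof -
  obtain r K where K: "r > 0" "compact K" "K \<subseteq> U" "\<And>x. x \<in> C \<Longrightarrow> cball x r \<subseteq> K"
    using compact_thickening[OF assms(1-3)] by blast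
  have "bounded (g ` K)"
    using compact_continuous_image[OF continuous_on_subset[OF assms(4) K(3)] K(2)]
    by (rule compact_imp_bounded)
  then obtain B where "B > 0" "\<And>a. a \<in> K \<Longrightarrow> norm (g a) \<le> B"
    unfolding bounded_pos by blast
  with K show ?thesis
    using that[of r B] by fastforce
qed

lemma continuous_on_uniformly_near_compact:
  fixes g :: "'a::euclidean_space \<Rightarrow> 'b::real_normed_vector"
  assumes "compact C" "open U" "C \<subseteq> U" "continuous_on U g" and e: "e > 0"
  obtains \<rho> where "\<rho> > 0" "\<And>x a. x \<in> C \<Longrightarrow> dist a x \<le> \<rho> \<Longrightarrow> a \<in> U \<and> dist (g a) (g x) \<le> e"
proof -
  obtain r K where K: "r > 0" "compact K" "K \<subseteq> U" "\<And>x. x \<in> C \<Longrightarrow> cball x r \<subseteq> K"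
    using compact_thickening[OF assms(1-3)] by blast
  have "uniformly_continuous_on K g"
    using compact_uniformly_continuous[OF continuous_on_subset[OF assms(4) K(3)] K(2)] .
  then obtain d where d: "d > 0" "\<And>a x. a \<in> K \<Longrightarrow> x \<in> K \<Longrightarrow> dist a x < d \<Longrightarrow> dist (g a) (g x) < e"
    unfolding uniformly_continuous_on_def using e by metis
  show ?thesis
  proof (rule that[of "min (d / 2) r"])
    fix x a assume x: "x \<in> C" and a: "dist a x \<le> min (d / 2) r"
    then have "a \<in> K" "x \<in> K"
      using K(1) K(4)[OF x] by (auto simp: dist_commute)
    moreover have "dist a x < d"
      using a d(1) by simp
    ultimately show "a \<in> U \<and> dist (g a) (g x) \<le> e"
      using d(2) K(3) by (auto intro: less_imp_le)
  qed (use d K in auto)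
qed

lemma integral_periodic_shift:
  fixes g :: "real \<Rightarrow> real"
  assumes g: "continuous_on UNIV g" and per: "\<And>x. g (x + T) = g x" and T: "0 \<le> T"
  shows "integral {0..T} (\<lambda>s. g (t + s)) = integral {0..T} g"
proof -
  define a where "a = min t 0 - 1"
  define G where "G x = integral {a..x} g" for x
  have G': "(G has_real_derivative g x) (at x)" if "a < x" for x
  proof -
    have "(G has_real_derivative g x) (at x within {a..x + 1})"
      unfolding G_def has_real_derivative_iff_has_vector_derivative
      using that by (intro integral_has_vector_derivative continuous_on_subset[OF g]) auto
    moreover have "x \<in> interior {a..x + 1}"
      using that by simp
    ultimately show ?thesis
      by (metis at_within_interior)
  qed
  have window: "integral {u..u + T} g = G (u + T) - G u" if "a \<le> u" for u
  proof -
    have "integral {a..u} g + integral {u..u + T} g = integral {a..u + T} g"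
      using that T
      by (intro Henstock_Kurzweil_Integration.integral_combine integrable_continuous_real
          continuous_on_subset[OF g]) auto
    then show ?thesis
      unfolding G_def by linarith
  qed
  \<comment> \<open>the integral over a window of length \<open>T\<close> does not depend on its position\<close>
  obtain c where c: "\<And>u. u \<in> {min t 0..max t 0} \<Longrightarrow> G (u + T) - G u = c"
  proof (rule has_vector_derivative_zero_constant)
    fix u assume "u \<in> {min t 0..max t 0}"
    then have "((\<lambda>u. G (u + T) - G u) has_real_derivative g (u + T) * 1 - g u) (at u)"
      using T by (intro DERIV_diff DERIV_chain2[OF G'] G' derivative_eq_intros) (auto simp: a_def)
    then show "((\<lambda>u. G (u + T) - G u) has_vector_derivative 0) (at u within {min t 0..max t 0})"
      using per by (simp add: has_real_derivative_iff_has_vector_derivative has_vector_derivative_at_within)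
  qed (simp, blast)
  then have "G (t + T) - G t = G (0 + T) - G 0"
    using c[of t] c[of 0] by simp
  moreover have "integral {0..T} (\<lambda>s. g (t + s)) = integral {t..t + T} g"
    using integral_shift_Icc_real[of 0 T g t] by (simp add: o_def add.commute)
  ultimately show ?thesis
    using window[of t] window[of 0] unfolding a_def by simp
qed

lemma linear_ode_comparison:
  fixes G H a b :: "real \<Rightarrow> real"
  assumes G: "\<And>\<sigma>. \<sigma> \<in> {0..s} \<Longrightarrow> (G has_real_derivative a \<sigma> * G \<sigma>) (at \<sigma> within {0..s})"
    and H: "\<And>\<sigma>. \<sigma> \<in> {0..s} \<Longrightarrow> (H has_real_derivative b \<sigma> * H \<sigma>) (at \<sigma> within {0..s})"
    and GH: "G 0 = H 0" and s: "0 \<le> s"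
    and K: "0 \<le> K" "\<And>\<sigma>. \<sigma> \<in> {0..s} \<Longrightarrow> \<bar>a \<sigma>\<bar> \<le> K" "\<And>\<sigma>. \<sigma> \<in> {0..s} \<Longrightarrow> \<bar>b \<sigma>\<bar> \<le> K"
    and \<omega>: "0 \<le> \<omega>" "\<And>\<sigma>. \<sigma> \<in> {0..s} \<Longrightarrow> \<bar>a \<sigma> - b \<sigma>\<bar> \<le> \<omega>"
  shows "\<bar>G s - H s\<bar> \<le> \<omega> * \<bar>G 0\<bar> * s * exp (2 * K * s)"
proof -
  have G_bound: "\<bar>G \<sigma>\<bar> \<le> \<bar>G 0\<bar> * exp (K * s)" if \<sigma>: "\<sigma> \<in> {0..s}" for \<sigma>
  proof -
    have "norm (G \<sigma>) \<le> (norm (G 0) + 0 * \<sigma>) * exp (K * \<sigma>)"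
      using G K \<sigma>
      by (intro gronwall_norm_bound[where u' = "\<lambda>\<sigma>. a \<sigma> * G \<sigma>" and S = s])
         (auto simp: has_real_derivative_iff_has_vector_derivative abs_mult mult_right_mono)
    also have "\<dots> \<le> \<bar>G 0\<bar> * exp (K * s)"
      using \<sigma> K by (auto intro!: mult_left_mono)
    finally show ?thesis
      by simp
  qed
  have "norm (G s - H s) \<le> (norm (G 0 - H 0) + \<omega> * (\<bar>G 0\<bar> * exp (K * s)) * s) * exp (K * s)"
  proof (rule gronwall_norm_bound[where u' = "\<lambda>\<sigma>. a \<sigma> * G \<sigma> - b \<sigma> * H \<sigma>" and S = s])
    show "((\<lambda>\<sigma>. G \<sigma> - H \<sigma>) has_vector_derivative a \<sigma> * G \<sigma> - b \<sigma> * H \<sigma>) (at \<sigma> within {0..s})"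
      if "\<sigma> \<in> {0..s}" for \<sigma>
      using G[OF that] H[OF that]
      by (auto intro: has_vector_derivative_diff simp: has_real_derivative_iff_has_vector_derivative)
    fix \<sigma> assume \<sigma>: "\<sigma> \<in> {0..s}"
    have "a \<sigma> * G \<sigma> - b \<sigma> * H \<sigma> = b \<sigma> * (G \<sigma> - H \<sigma>) + (a \<sigma> - b \<sigma>) * G \<sigma>"
      by (simp add: algebra_simps)
    then have "\<bar>a \<sigma> * G \<sigma> - b \<sigma> * H \<sigma>\<bar> \<le> \<bar>b \<sigma>\<bar> * \<bar>G \<sigma> - H \<sigma>\<bar> + \<bar>a \<sigma> - b \<sigma>\<bar> * \<bar>G \<sigma>\<bar>"
      by (metis abs_mult abs_triangle_ineq)
    also have "\<dots> \<le> K * \<bar>G \<sigma> - H \<sigma>\<bar> + \<omega> * (\<bar>G 0\<bar> * exp (K * s))"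
      using K(3)[OF \<sigma>] \<omega>(1) \<omega>(2)[OF \<sigma>] G_bound[OF \<sigma>] by (intro add_mono mult_mono) auto
    finally show "norm (a \<sigma> * G \<sigma> - b \<sigma> * H \<sigma>) \<le> K * norm (G \<sigma> - H \<sigma>) + \<omega> * (\<bar>G 0\<bar> * exp (K * s))"
      by simp
  qed (use K \<omega> s in auto)
  also have "\<dots> = \<omega> * \<bar>G 0\<bar> * s * (exp (K * s) * exp (K * s))"
    using GH by (simp add: algebra_simps)
  finally show ?thesis
    by (simp add: exp_add[symmetric] mult.assoc)
qed

section \<open>Solutions of a \<open>C\<^sup>1\<close> vector field\<close>

locale c1_vector_field =
  fixes U :: "'a::euclidean_space set" and F :: "'a \<Rightarrow> 'a" and F' :: "'a \<Rightarrow> 'a \<Rightarrow>\<^sub>L 'a"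
  assumes open_domain: "open U"
    and has_derivative_field: "\<And>x. x \<in> U \<Longrightarrow> (F has_derivative blinfun_apply (F' x)) (at x)"
    and continuous_on_derivative: "continuous_on U F'"
begin

definition solves_on :: "(real \<Rightarrow> 'a) \<Rightarrow> real \<Rightarrow> bool" where
  "solves_on \<phi> S \<longleftrightarrow>
     (\<forall>\<sigma>\<in>{0..S}. \<phi> \<sigma> \<in> U \<and> (\<phi> has_vector_derivative F (\<phi> \<sigma>)) (at \<sigma> within {0..S}))"

lemma solves_on_subinterval:
  assumes "solves_on \<phi> S" "s \<in> {0..S}"
  shows "solves_on \<phi> s"
  using assms unfolding solves_on_def
  by (auto intro: has_vector_derivative_within_subset[of _ _ _ "{0..S}"])

lemma solves_on_global:
  assumes "\<And>s. y s \<in> U" "\<And>s. (y has_vector_derivative F (y s)) (at s)"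
  shows "solves_on y S"
  using assms unfolding solves_on_def by (auto intro: has_vector_derivative_at_within)

lemma solves_on_continuous:
  assumes "solves_on \<phi> S"
  shows "continuous_on {0..S} \<phi>"
  using assms unfolding solves_on_def by (intro continuous_on_vector_derivative) blast

lemma solves_on_orbit:
  assumes "solves_on \<phi> S"
  shows "compact (\<phi> ` {0..S})" "\<phi> ` {0..S} \<subseteq> U"
  using compact_continuous_image[OF solves_on_continuous[OF assms]] assms
  unfolding solves_on_def by auto

lemma lipschitz_near_compact:
  assumes "compact C" "C \<subseteq> U"
  obtains r B where "r > 0" "B \<ge> 0"
    "\<And>x a. x \<in> C \<Longrightarrow> a \<in> cball x r \<Longrightarrow> norm (F' a) \<le> B \<and> norm (F a - F x) \<le> B * norm (a - x)"
proof -
  obtain r B where r: "r > 0" "B \<ge> 0" and B: "\<And>x a. x \<in> C \<Longrightarrow> a \<in> cball x r \<Longrightarrow> a \<in> U \<and> norm (F' a) \<le> B"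
    using continuous_on_bounded_near_compact[OF assms(1) open_domain assms(2) continuous_on_derivative]
    by metis
  have "norm (F a - F x) \<le> B * norm (a - x)" if x: "x \<in> C" and a: "a \<in> cball x r" for x a
  proof -
    have "norm (F a - F x) \<le> B * norm (a - x)"
    proof (rule differentiable_bound[of "cball x r" F "\<lambda>z. blinfun_apply (F' z)"])
      show "(F has_derivative blinfun_apply (F' z)) (at z within cball x r)" if "z \<in> cball x r" for z
        using has_derivative_field B[OF x that] has_derivative_at_withinI by blast
      show "onorm (blinfun_apply (F' z)) \<le> B" if "z \<in> cball x r" for z
        using B[OF x that] by (simp add: norm_blinfun.rep_eq)
    qed (use a r in auto)
    then show ?thesis .
  qed
  with r B show ?thesis
    using that by blast
qed

lemma uniform_linearization_near_compact:
  assumes "compact C" "C \<subseteq> U" "e > 0"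
  obtains \<rho> where "\<rho> > 0"
    "\<And>x a. x \<in> C \<Longrightarrow> dist a x \<le> \<rho> \<Longrightarrow> norm (F a - F x - F' x (a - x)) \<le> e * norm (a - x)"
proof -
  obtain \<rho> where \<rho>: "\<rho> > 0" "\<And>x a. x \<in> C \<Longrightarrow> dist a x \<le> \<rho> \<Longrightarrow> a \<in> U \<and> dist (F' a) (F' x) \<le> e"
    using continuous_on_uniformly_near_compact[OF assms(1) open_domain assms(2) continuous_on_derivative assms(3)]
    by metis
  have "norm (F a - F x - F' x (a - x)) \<le> e * norm (a - x)" if x: "x \<in> C" and a: "dist a x \<le> \<rho>" for x a
  proof -
    have "norm (F a - F x - F' x (a - x)) \<le> norm (a - x) * e"
    proof (rule differentiable_bound_linearization[of x a "cball x \<rho>" F "\<lambda>z. blinfun_apply (F' z)"])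
      show "x + t *\<^sub>R (a - x) \<in> cball x \<rho>" if "t \<in> {0..1}" for t
      proof -
        have "norm (t *\<^sub>R (a - x)) \<le> norm (a - x)"
          using that by (simp add: mult_left_le_one_le)
        then show ?thesis
          using a by (simp add: dist_norm norm_minus_commute)
      qed
      show "(F has_derivative blinfun_apply (F' z)) (at z within cball x \<rho>)" if "z \<in> cball x \<rho>" for z
        using has_derivative_field \<rho>(2)[OF x] that has_derivative_at_withinI
        by (metis dist_commute mem_cball)
      show "onorm (blinfun_apply (F' z) - blinfun_apply (F' x)) \<le> e" if "z \<in> cball x \<rho>" for z
        using \<rho>(2)[OF x, of z] that
        by (simp add: dist_norm norm_blinfun.rep_eq minus_blinfun.rep_eq fun_diff_def norm_minus_commute)
    qed (use \<rho> in auto)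
    then show ?thesis
      by (simp add: mult.commute)
  qed
  with \<rho> show ?thesis
    using that by blast
qed

lemma gronwall_near_solution:
  assumes y: "solves_on y s" and \<phi>: "solves_on \<phi> s" and x: "x \<in> {0..s}" and B: "B \<ge> 0"
    and lip: "\<And>\<sigma>. \<sigma> \<in> {0..x} \<Longrightarrow> norm (F (\<phi> \<sigma>) - F (y \<sigma>)) \<le> B * norm (\<phi> \<sigma> - y \<sigma>)"
  shows "norm (\<phi> x - y x) \<le> norm (\<phi> 0 - y 0) * exp (B * x)"
proof -
  have "norm (\<phi> x - y x) \<le> (norm (\<phi> 0 - y 0) + 0 * x) * exp (B * x)"
  proof (rule gronwall_norm_bound[where u' = "\<lambda>\<sigma>. F (\<phi> \<sigma>) - F (y \<sigma>)" and S = x])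
    show "((\<lambda>\<sigma>. \<phi> \<sigma> - y \<sigma>) has_vector_derivative F (\<phi> \<sigma>) - F (y \<sigma>)) (at \<sigma> within {0..x})"
      if "\<sigma> \<in> {0..x}" for \<sigma>
      using solves_on_subinterval[OF \<phi> x] solves_on_subinterval[OF y x] that
      unfolding solves_on_def by (intro has_vector_derivative_diff) auto
  qed (use lip B x in auto)
  then show ?thesis
    by simp
qed

lemma solutions_lipschitz_dependence:
  assumes y: "solves_on y S" and S: "0 \<le> S"
  obtains E where "E \<ge> 1"
    "\<forall>\<^sub>F q in nhds (y 0). \<forall>s\<in>{0..S}. \<forall>\<phi>. solves_on \<phi> s \<and> \<phi> 0 = q \<longrightarrow>
       (\<forall>\<sigma>\<in>{0..s}. norm (\<phi> \<sigma> - y \<sigma>) \<le> E * norm (q - y 0))"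
proof -
  obtain r B where r: "r > 0" "B \<ge> 0"
    and lip: "\<And>x a. x \<in> y ` {0..S} \<Longrightarrow> a \<in> cball x r \<Longrightarrow> norm (F a - F x) \<le> B * norm (a - x)"
    using lipschitz_near_compact[OF solves_on_orbit[OF y]] by metis
  define E where "E = exp (B * S)"
  have E: "E \<ge> 1"
    using r S by (simp add: E_def)
  have stays_close: "\<forall>s\<in>{0..S}. \<forall>\<phi>. solves_on \<phi> s \<and> \<phi> 0 = q \<longrightarrow>
      (\<forall>\<sigma>\<in>{0..s}. norm (\<phi> \<sigma> - y \<sigma>) \<le> E * norm (q - y 0))"
    if q: "norm (q - y 0) < r / E" for q
  proof (intro ballI allI impI)
    fix s \<phi> \<sigma> assume s: "s \<in> {0..S}" and \<phi>: "solves_on \<phi> s \<and> \<phi> 0 = q" and \<sigma>: "\<sigma> \<in> {0..s}"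
    define g where "g x = norm (\<phi> x - y x)" for x
    have ys: "solves_on y s"
      using solves_on_subinterval[OF y s] .
    have in_tube: "g x \<le> E * norm (q - y 0)" if x: "x \<in> {0..s}" and close: "\<forall>z\<in>{0..x}. g z \<le> r" for x
    proof -
      have "norm (\<phi> x - y x) \<le> norm (\<phi> 0 - y 0) * exp (B * x)"
      proof (rule gronwall_near_solution[OF ys conjunct1[OF \<phi>] x r(2)])
        fix z assume z: "z \<in> {0..x}"
        have "y z \<in> y ` {0..S}"
          using z x s by auto
        moreover have "\<phi> z \<in> cball (y z) r"
          using close z by (simp add: g_def dist_norm norm_minus_commute)
        ultimately show "norm (F (\<phi> z) - F (y z)) \<le> B * norm (\<phi> z - y z)"
          using lip by simp
      qed
      also have "\<dots> \<le> norm (q - y 0) * E"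
        using \<phi> x s r unfolding E_def by (auto intro!: mult_left_mono)
      finally show ?thesis
        by (simp add: g_def mult.commute)
    qed
    have "\<forall>x\<in>{0..s}. g x < r"
    proof (rule continuous_bootstrap_less)
      show "continuous_on {0..s} g"
        unfolding g_def using \<phi> ys by (intro continuous_intros solves_on_continuous) auto
      have "r / E \<le> r"
        using r E by (simp add: field_simps mult_le_cancel_left1)
      then show "g 0 < r"
        using \<phi> q by (simp add: g_def)
      show "g x < r" if "x \<in> {0..s}" "\<forall>z\<in>{0..x}. g z \<le> r" for x
        using in_tube[OF that] q E by (simp add: field_simps)
    qed
    then have "\<forall>z\<in>{0..\<sigma>}. g z \<le> r"
      using \<sigma> by (auto intro!: less_imp_le)
    then show "norm (\<phi> \<sigma> - y \<sigma>) \<le> E * norm (q - y 0)"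
      using in_tube[OF \<sigma>] unfolding g_def by blast
  qed
  have "r / E > 0"
    using r E by simp
  with stays_close show ?thesis
    using that[OF E] unfolding eventually_nhds_metric dist_norm
    by (metis (no_types, lifting))
qed

lemma solves_on_unique:
  assumes "solves_on \<phi>\<^sub>1 t" "solves_on \<phi>\<^sub>2 t" "\<phi>\<^sub>1 0 = \<phi>\<^sub>2 0" "0 \<le> t"
  shows "\<phi>\<^sub>1 t = \<phi>\<^sub>2 t"
proof -
  obtain E where "E \<ge> 1" and close: "\<forall>\<^sub>F q in nhds (\<phi>\<^sub>2 0). \<forall>s\<in>{0..t}. \<forall>\<phi>. solves_on \<phi> s \<and> \<phi> 0 = q \<longrightarrow>
       (\<forall>\<sigma>\<in>{0..s}. norm (\<phi> \<sigma> - \<phi>\<^sub>2 \<sigma>) \<le> E * norm (q - \<phi>\<^sub>2 0))"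
    by (rule solutions_lipschitz_dependence[OF assms(2,4)])
  have "t \<in> {0..t}"
    using assms(4) by simp
  with eventually_nhds_x_imp_x[OF close] assms(1,3)
  have "norm (\<phi>\<^sub>1 t - \<phi>\<^sub>2 t) \<le> E * norm (\<phi>\<^sub>2 0 - \<phi>\<^sub>2 0)"
    by blast
  then show ?thesis
    by simp
qed

lemma linearization_defect_bound:
  assumes y: "solves_on y s" and \<phi>: "solves_on \<phi> s" and s: "0 \<le> s"
    and M: "\<And>h \<sigma>. \<sigma> \<in> {0..s} \<Longrightarrow>
      ((\<lambda>s. M s h) has_vector_derivative F' (y \<sigma>) (M \<sigma> h)) (at \<sigma> within {0..s})"
    and M0: "\<And>h. M 0 h = h"
    and B: "B \<ge> 0" "\<And>\<sigma>. \<sigma> \<in> {0..s} \<Longrightarrow> norm (F' (y \<sigma>)) \<le> B"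
    and remainder: "e \<ge> 0" "\<And>\<sigma>. \<sigma> \<in> {0..s} \<Longrightarrow> norm (F (\<phi> \<sigma>) - F (y \<sigma>) - F' (y \<sigma>) (\<phi> \<sigma> - y \<sigma>)) \<le> e"
  shows "norm (\<phi> s - y s - M s (\<phi> 0 - y 0)) \<le> e * s * exp (B * s)"
proof -
  define h where "h = \<phi> 0 - y 0"
  \<comment> \<open>\<open>\<phi> - y - M h\<close> solves the variational equation up to the linearization remainder\<close>
  have "norm (\<phi> s - y s - M s h) \<le> (norm (\<phi> 0 - y 0 - M 0 h) + e * s) * exp (B * s)"
  proof (rule gronwall_norm_bound[where u' = "\<lambda>\<sigma>. F (\<phi> \<sigma>) - F (y \<sigma>) - F' (y \<sigma>) (M \<sigma> h)" and S = s])
    fix \<sigma> assume \<sigma>: "\<sigma> \<in> {0..s}"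
    show "((\<lambda>\<sigma>. \<phi> \<sigma> - y \<sigma> - M \<sigma> h) has_vector_derivative
        F (\<phi> \<sigma>) - F (y \<sigma>) - F' (y \<sigma>) (M \<sigma> h)) (at \<sigma> within {0..s})"
      using \<phi> y M[OF \<sigma>] \<sigma> unfolding solves_on_def by (intro has_vector_derivative_diff) auto
    have "F (\<phi> \<sigma>) - F (y \<sigma>) - F' (y \<sigma>) (M \<sigma> h)
        = (F (\<phi> \<sigma>) - F (y \<sigma>) - F' (y \<sigma>) (\<phi> \<sigma> - y \<sigma>)) + F' (y \<sigma>) (\<phi> \<sigma> - y \<sigma> - M \<sigma> h)"
      by (simp add: blinfun.diff_right)
    also have "norm \<dots> \<le> e + B * norm (\<phi> \<sigma> - y \<sigma> - M \<sigma> h)"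
    proof (rule order_trans[OF norm_triangle_ineq add_mono])
      show "norm (F' (y \<sigma>) (\<phi> \<sigma> - y \<sigma> - M \<sigma> h)) \<le> B * norm (\<phi> \<sigma> - y \<sigma> - M \<sigma> h)"
        using norm_blinfun[of "F' (y \<sigma>)"] B(2)[OF \<sigma>] by (meson mult_right_mono norm_ge_zero order_trans)
    qed (use remainder \<sigma> in auto)
    finally show "norm (F (\<phi> \<sigma>) - F (y \<sigma>) - F' (y \<sigma>) (M \<sigma> h)) \<le> B * norm (\<phi> \<sigma> - y \<sigma> - M \<sigma> h) + e"
      by simp
  qed (use B remainder s in auto)
  then show ?thesis
    using M0 unfolding h_def by (simp add: mult.assoc)
qed

lemma solutions_linearization:
  assumes y: "solves_on y S" and S: "0 \<le> S"
    and M: "\<And>h s. s \<in> {0..S} \<Longrightarrow>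
      ((\<lambda>s. M s h) has_vector_derivative F' (y s) (M s h)) (at s within {0..S})"
    and M0: "\<And>h. M 0 h = h" and \<epsilon>: "\<epsilon> > 0"
  shows "\<forall>\<^sub>F q in nhds (y 0). \<forall>s\<in>{0..S}. \<forall>\<phi>. solves_on \<phi> s \<and> \<phi> 0 = q \<longrightarrow>
           norm (\<phi> s - y s - M s (q - y 0)) \<le> \<epsilon> * norm (q - y 0)"
proof -
  let ?C = "y ` {0..S}"
  obtain E where E: "E \<ge> 1" and close: "\<forall>\<^sub>F q in nhds (y 0). \<forall>s\<in>{0..S}. \<forall>\<phi>. solves_on \<phi> s \<and> \<phi> 0 = q \<longrightarrow>
       (\<forall>\<sigma>\<in>{0..s}. norm (\<phi> \<sigma> - y \<sigma>) \<le> E * norm (q - y 0))"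
    by (rule solutions_lipschitz_dependence[OF y S])
  obtain r B where "r > 0" "B \<ge> 0"
    and bounds: "\<And>x a. x \<in> ?C \<Longrightarrow> a \<in> cball x r \<Longrightarrow> norm (F' a) \<le> B \<and> norm (F a - F x) \<le> B * norm (a - x)"
    using lipschitz_near_compact[OF solves_on_orbit[OF y]] by blast
  then have B: "B \<ge> 0" "\<And>x. x \<in> ?C \<Longrightarrow> norm (F' x) \<le> B"
    by auto
  define \<epsilon>\<^sub>1 where "\<epsilon>\<^sub>1 = \<epsilon> / (E * (S + 1) * exp (B * S))"
  have \<epsilon>\<^sub>1: "\<epsilon>\<^sub>1 > 0"
    unfolding \<epsilon>\<^sub>1_def using \<epsilon> E S by simp
  obtain \<rho> where \<rho>: "\<rho> > 0"
    and lin: "\<And>x a. x \<in> ?C \<Longrightarrow> dist a x \<le> \<rho> \<Longrightarrow> norm (F a - F x - F' x (a - x)) \<le> \<epsilon>\<^sub>1 * norm (a - x)"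
    using uniform_linearization_near_compact[OF solves_on_orbit[OF y] \<epsilon>\<^sub>1] by metis
  have "\<forall>\<^sub>F q in nhds (y 0). E * norm (q - y 0) \<le> \<rho>"
    unfolding eventually_nhds_metric dist_norm using \<rho> E
    by (intro exI[of _ "\<rho> / E"]) (auto simp: field_simps)
  with close show ?thesis
  proof eventually_elim
    case (elim q)
    show ?case
    proof (intro ballI allI impI)
      fix s \<phi> assume s: "s \<in> {0..S}" and \<phi>: "solves_on \<phi> s \<and> \<phi> 0 = q"
      have "norm (\<phi> s - y s - M s (\<phi> 0 - y 0)) \<le> \<epsilon>\<^sub>1 * (E * norm (q - y 0)) * s * exp (B * s)"
      proof (rule linearization_defect_bound[OF solves_on_subinterval[OF y s] conjunct1[OF \<phi>]])
        fix \<sigma> assume \<sigma>: "\<sigma> \<in> {0..s}"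
        have "y \<sigma> \<in> ?C"
          using \<sigma> s by auto
        moreover have "norm (\<phi> \<sigma> - y \<sigma>) \<le> E * norm (q - y 0)"
          using elim s \<phi> \<sigma> by blast
        ultimately show "norm (F (\<phi> \<sigma>) - F (y \<sigma>) - F' (y \<sigma>) (\<phi> \<sigma> - y \<sigma>)) \<le> \<epsilon>\<^sub>1 * (E * norm (q - y 0))"
          using lin[of "y \<sigma>" "\<phi> \<sigma>"] elim \<epsilon>\<^sub>1
          by (smt (verit, best) dist_norm mult_left_mono)
        show "((\<lambda>s. M s h) has_vector_derivative F' (y \<sigma>) (M \<sigma> h)) (at \<sigma> within {0..s})" for h
          using M[of \<sigma> h] \<sigma> s by (auto intro: has_vector_derivative_within_subset)
        show "norm (F' (y \<sigma>)) \<le> B"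
          using B(2) \<sigma> s by auto
      qed (use s B M0 \<epsilon>\<^sub>1 E in auto)
      also have "\<dots> \<le> \<epsilon>\<^sub>1 * (E * norm (q - y 0)) * (S + 1) * exp (B * S)"
        using s B \<epsilon>\<^sub>1 E by (auto intro!: mult_mono)
      also have "\<dots> = \<epsilon> / (E * (S + 1) * exp (B * S)) * (E * (S + 1) * exp (B * S)) * norm (q - y 0)"
        unfolding \<epsilon>\<^sub>1_def by (simp add: mult_ac)
      also have "\<dots> = \<epsilon> * norm (q - y 0)"
        using E S by simp
      finally show "norm (\<phi> s - y s - M s (q - y 0)) \<le> \<epsilon> * norm (q - y 0)"
        using \<phi> by simp
    qed
  qed
qed

lemma field_along_solution:
  assumes "y s \<in> U" "(y has_vector_derivative F (y s)) (at s within S)"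
  shows "((\<lambda>s. F (y s)) has_vector_derivative F' (y s) (F (y s))) (at s within S)"
  using has_derivative_compose[OF assms(2)[unfolded has_vector_derivative_def]
      has_derivative_field[OF assms(1)]]
  by (simp add: has_vector_derivative_def blinfun.scaleR_right)

lemma cofactor_along_solution:
  assumes f: "\<And>x. x \<in> U \<Longrightarrow> (f has_derivative f' x) (at x)" "\<And>x. x \<in> U \<Longrightarrow> f' x (F x) = k x * f x"
    and \<phi>: "solves_on \<phi> s" and \<sigma>: "\<sigma> \<in> {0..s}"
  shows "((\<lambda>\<sigma>. f (\<phi> \<sigma>)) has_real_derivative k (\<phi> \<sigma>) * f (\<phi> \<sigma>)) (at \<sigma> within {0..s})"
proof -
  have U: "\<phi> \<sigma> \<in> U" and d\<phi>: "(\<phi> has_derivative (\<lambda>t. t *\<^sub>R F (\<phi> \<sigma>))) (at \<sigma> within {0..s})"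
    using \<phi> \<sigma> unfolding solves_on_def has_vector_derivative_def by auto
  have "((\<lambda>\<sigma>. f (\<phi> \<sigma>)) has_derivative (\<lambda>t. f' (\<phi> \<sigma>) (t *\<^sub>R F (\<phi> \<sigma>)))) (at \<sigma> within {0..s})"
    using has_derivative_compose[OF d\<phi> f(1)[OF U]] .
  moreover have "f' (\<phi> \<sigma>) (t *\<^sub>R F (\<phi> \<sigma>)) = t * (k (\<phi> \<sigma>) * f (\<phi> \<sigma>))" for t
    using linear_cmul[OF has_derivative_linear[OF f(1)[OF U]]] f(2)[OF U] by simp
  ultimately show ?thesis
    unfolding has_real_derivative_iff_has_vector_derivative has_vector_derivative_def by simp
qed

end

section \<open>Return maps along a periodic orbit\<close>

text \<open>\<open>R\<close> need not be a first-return map: only \<open>R q = \<phi>\<^sub>q (\<tau> q)\<close> for \<open>q\<close> near \<open>y 0\<close> is used,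
  where \<open>\<phi>\<^sub>q\<close> is the solution starting at \<open>q\<close>.\<close>

locale return_map = c1_vector_field U F F'
  for U :: "'a::euclidean_space set" and F F' +
  fixes y :: "real \<Rightarrow> 'a" and T :: real and \<tau> :: "'a \<Rightarrow> real" and R :: "'a \<Rightarrow> 'a"
  assumes orbit_in_domain: "\<And>s. y s \<in> U"
    and orbit_solves: "\<And>s. (y has_vector_derivative F (y s)) (at s)"
    and period_pos: "T > 0" and orbit_closes: "y T = y 0"
    and return_time: "continuous (at (y 0)) \<tau>" "\<tau> (y 0) = T"
    and return_along_solutions:
      "\<forall>\<^sub>F q in nhds (y 0). \<exists>\<phi>. solves_on \<phi> (\<tau> q) \<and> \<phi> 0 = q \<and> R q = \<phi> (\<tau> q)"
begin

lemma orbit_solves_on: "solves_on y S"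
  using orbit_in_domain orbit_solves by (rule solves_on_global)

lemma eventually_return_time:
  assumes "T < S"
  shows "\<forall>\<^sub>F q in nhds (y 0). \<tau> q \<in> {0..S}"
proof -
  have "\<forall>\<^sub>F q in at (y 0). \<tau> q \<in> {0<..<S}"
    using return_time assms period_pos unfolding continuous_at
    by (intro topological_tendstoD) auto
  then show ?thesis
    using return_time(2) assms period_pos
    by (auto simp: eventually_nhds_conv_at elim: eventually_mono)
qed

lemma return_map_fixed: "R (y 0) = y 0"
proof -
  obtain \<phi> where "solves_on \<phi> T" "\<phi> 0 = y 0" "R (y 0) = \<phi> T"
    using eventually_nhds_x_imp_x[OF return_along_solutions] return_time(2) by auto
  then show ?thesis
    using solves_on_unique[OF _ orbit_solves_on] period_pos orbit_closes by force
qed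

lemma return_map_has_derivative:
  fixes M :: "real \<Rightarrow> 'a \<Rightarrow>\<^sub>L 'a"
  assumes \<tau>': "(\<tau> has_derivative \<tau>') (at (y 0))" and S: "T < S"
    and M: "\<And>h s. s \<in> {0..S} \<Longrightarrow>
        ((\<lambda>s. M s h) has_vector_derivative F' (y s) (M s h)) (at s within {0..S})"
      "\<And>h. M 0 h = h" "continuous_on {0..S} M"
  shows "(R has_derivative (\<lambda>h. M T h + \<tau>' h *\<^sub>R F (y 0))) (at (y 0))"
proof (rule has_derivative_first_order_contact)
  have "(y has_derivative (\<lambda>t. t *\<^sub>R F (y 0))) (at (\<tau> (y 0)))"
    using orbit_solves[of T] return_time(2) orbit_closes by (simp add: has_vector_derivative_def)
  from has_derivative_add[OF bounded_linear.has_derivative[OF blinfun.bounded_linear_right[of "M T"]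
        has_derivative_diff[OF has_derivative_ident has_derivative_const]]
      has_derivative_compose[OF \<tau>' this]]
  show "((\<lambda>q. M T (q - y 0) + y (\<tau> q)) has_derivative (\<lambda>h. M T h + \<tau>' h *\<^sub>R F (y 0))) (at (y 0))"
    by (simp add: blinfun.diff_right)
  show "R (y 0) = M T (y 0 - y 0) + y (\<tau> (y 0))"
    using return_map_fixed return_time(2) orbit_closes by simp
  fix \<epsilon> :: real assume \<epsilon>: "\<epsilon> > 0"
  note nhds_imp_at = eventually_nhds_conv_at[THEN iffD1, THEN conjunct1]
  have "\<forall>\<^sub>F q in at (y 0). \<forall>s\<in>{0..S}. \<forall>\<phi>. solves_on \<phi> s \<and> \<phi> 0 = q \<longrightarrow>
      norm (\<phi> s - y s - M s (q - y 0)) \<le> \<epsilon> / 2 * norm (q - y 0)"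
    using solutions_linearization[OF orbit_solves_on _ M(1,2), of "\<epsilon> / 2"] S period_pos \<epsilon>
    by (intro nhds_imp_at) simp
  moreover have "\<forall>\<^sub>F q in at (y 0). \<tau> q \<in> {0..S}"
    using nhds_imp_at[OF eventually_return_time[OF S]] .
  moreover have "\<forall>\<^sub>F q in at (y 0). \<exists>\<phi>. solves_on \<phi> (\<tau> q) \<and> \<phi> 0 = q \<and> R q = \<phi> (\<tau> q)"
    using nhds_imp_at[OF return_along_solutions] .
  moreover have "isCont M T"
    using M(3) S period_pos by (intro continuous_on_interior[of "{0..S}"]) auto
  then have "isCont (\<lambda>q. M (\<tau> q)) (y 0)"
    using continuous_at_compose[OF return_time(1)] return_time(2) by (simp add: o_def)
  then have "\<forall>\<^sub>F q in at (y 0). norm (M (\<tau> q) - M T) < \<epsilon> / 2"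
    using \<epsilon> return_time(2) unfolding continuous_at tendsto_iff dist_norm
    by (metis half_gt_zero)
  ultimately show "\<forall>\<^sub>F q in at (y 0). norm (R q - (M T (q - y 0) + y (\<tau> q))) \<le> \<epsilon> * norm (q - y 0)"
  proof eventually_elim
    case (elim q)
    then obtain \<phi> where \<phi>: "solves_on \<phi> (\<tau> q)" "\<phi> 0 = q" "R q = \<phi> (\<tau> q)"
      by blast
    have "R q - (M T (q - y 0) + y (\<tau> q)) = (\<phi> (\<tau> q) - y (\<tau> q) - M (\<tau> q) (q - y 0)) + (M (\<tau> q) - M T) (q - y 0)"
      by (simp add: \<phi>(3) blinfun.diff_left)
    also have "norm \<dots> \<le> \<epsilon> / 2 * norm (q - y 0) + \<epsilon> / 2 * norm (q - y 0)"
    proof (rule order_trans[OF norm_triangle_ineq add_mono])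
      show "norm (\<phi> (\<tau> q) - y (\<tau> q) - M (\<tau> q) (q - y 0)) \<le> \<epsilon> / 2 * norm (q - y 0)"
        using elim \<phi> by blast
      show "norm ((M (\<tau> q) - M T) (q - y 0)) \<le> \<epsilon> / 2 * norm (q - y 0)"
        using norm_blinfun[of "M (\<tau> q) - M T" "q - y 0"] elim
        by (meson less_imp_le mult_right_mono norm_ge_zero order_trans)
    qed
    finally show ?case
      by simp
  qed
qed

lemma continuous_on_along_orbit:
  assumes "continuous_on U k"
  shows "continuous_on UNIV (\<lambda>s. k (y s))"
proof -
  have "continuous_on UNIV y"
    using orbit_solves by (meson continuous_at_imp_continuous_on has_vector_derivative_continuous)
  then show ?thesis
    using continuous_on_compose2[OF assms] orbit_in_domain by auto
qed

lemma orbit_integral_has_derivative: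
  assumes "continuous_on U k" "\<sigma> \<in> {0..s}"
  shows "((\<lambda>s. integral {0..s} (\<lambda>\<sigma>. k (y \<sigma>))) has_real_derivative k (y \<sigma>)) (at \<sigma> within {0..s})"
  unfolding has_real_derivative_iff_has_vector_derivative
  by (rule integral_has_vector_derivative[OF continuous_on_subset[OF continuous_on_along_orbit[OF assms(1)]]
        assms(2)]) simp

lemma cofactor_comparison:
  fixes f k :: "'a \<Rightarrow> real"
  assumes f: "\<And>x. x \<in> U \<Longrightarrow> (f has_derivative f' x) (at x)" "\<And>x. x \<in> U \<Longrightarrow> f' x (F x) = k x * f x"
    and k: "continuous_on U k" and \<phi>: "solves_on \<phi> s" and s: "0 \<le> s"
    and K: "0 \<le> K" "\<And>\<sigma>. \<sigma> \<in> {0..s} \<Longrightarrow> \<bar>k (\<phi> \<sigma>)\<bar> \<le> K" "\<And>\<sigma>. \<sigma> \<in> {0..s} \<Longrightarrow> \<bar>k (y \<sigma>)\<bar> \<le> K"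
    and \<omega>: "0 \<le> \<omega>" "\<And>\<sigma>. \<sigma> \<in> {0..s} \<Longrightarrow> \<bar>k (\<phi> \<sigma>) - k (y \<sigma>)\<bar> \<le> \<omega>"
  shows "\<bar>f (\<phi> s) - f (\<phi> 0) * exp (integral {0..s} (\<lambda>\<sigma>. k (y \<sigma>)))\<bar> \<le> \<omega> * \<bar>f (\<phi> 0)\<bar> * s * exp (2 * K * s)"
proof (rule linear_ode_comparison[where a = "\<lambda>\<sigma>. k (\<phi> \<sigma>)" and b = "\<lambda>\<sigma>. k (y \<sigma>)"])
  show "((\<lambda>\<sigma>. f (\<phi> \<sigma>)) has_real_derivative k (\<phi> \<sigma>) * f (\<phi> \<sigma>)) (at \<sigma> within {0..s})"
    if "\<sigma> \<in> {0..s}" for \<sigma>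
    using cofactor_along_solution[OF f \<phi> that] .
  show "((\<lambda>\<sigma>. f (\<phi> 0) * exp (integral {0..\<sigma>} (\<lambda>\<sigma>. k (y \<sigma>)))) has_real_derivative
      k (y \<sigma>) * (f (\<phi> 0) * exp (integral {0..\<sigma>} (\<lambda>\<sigma>. k (y \<sigma>))))) (at \<sigma> within {0..s})"
    if "\<sigma> \<in> {0..s}" for \<sigma>
    using orbit_integral_has_derivative[OF k that] by (auto intro!: derivative_eq_intros)
qed (use K \<omega> s in auto)

lemma cofactor_along_nearby_solutions:
  fixes f k :: "'a \<Rightarrow> real"
  assumes f: "\<And>x. x \<in> U \<Longrightarrow> (f has_derivative f' x) (at x)" "\<And>x. x \<in> U \<Longrightarrow> f' x (F x) = k x * f x"
    and k: "continuous_on U k" and S: "0 \<le> S" and \<epsilon>: "\<epsilon> > 0"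
  shows "\<forall>\<^sub>F q in nhds (y 0). \<forall>s\<in>{0..S}. \<forall>\<phi>. solves_on \<phi> s \<and> \<phi> 0 = q \<longrightarrow>
           \<bar>f (\<phi> s) - f q * exp (integral {0..s} (\<lambda>\<sigma>. k (y \<sigma>)))\<bar> \<le> \<epsilon> * \<bar>f q\<bar>"
proof -
  let ?C = "y ` {0..S}"
  note C = solves_on_orbit[OF orbit_solves_on]
  obtain r K where r: "r > 0" "K \<ge> 0" and K: "\<And>x a. x \<in> ?C \<Longrightarrow> a \<in> cball x r \<Longrightarrow> a \<in> U \<and> norm (k a) \<le> K"
    using continuous_on_bounded_near_compact[OF C(1) open_domain C(2) k] by metis
  define \<omega> where "\<omega> = \<epsilon> / (S * exp (2 * K * S) + 1)"
  have \<omega>: "\<omega> > 0"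
    unfolding \<omega>_def using \<epsilon> S by (simp add: add_nonneg_pos)
  obtain \<rho> where \<rho>: "\<rho> > 0" "\<And>x a. x \<in> ?C \<Longrightarrow> dist a x \<le> \<rho> \<Longrightarrow> a \<in> U \<and> dist (k a) (k x) \<le> \<omega>"
    using continuous_on_uniformly_near_compact[OF C(1) open_domain C(2) k \<omega>] by metis
  obtain E where E: "E \<ge> 1" and close: "\<forall>\<^sub>F q in nhds (y 0). \<forall>s\<in>{0..S}. \<forall>\<phi>. solves_on \<phi> s \<and> \<phi> 0 = q \<longrightarrow>
       (\<forall>\<sigma>\<in>{0..s}. norm (\<phi> \<sigma> - y \<sigma>) \<le> E * norm (q - y 0))"
    by (rule solutions_lipschitz_dependence[OF orbit_solves_on S])
  have "\<forall>\<^sub>F q in nhds (y 0). E * norm (q - y 0) \<le> min r \<rho>"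
    unfolding eventually_nhds_metric dist_norm using r \<rho> E
    by (intro exI[of _ "min r \<rho> / E"]) (auto simp: field_simps)
  with close show ?thesis
  proof eventually_elim
    case (elim q)
    show ?case
    proof (intro ballI allI impI)
      fix s \<phi> assume s: "s \<in> {0..S}" and \<phi>: "solves_on \<phi> s \<and> \<phi> 0 = q"
      have near: "y \<sigma> \<in> ?C" "dist (\<phi> \<sigma>) (y \<sigma>) \<le> r" "dist (\<phi> \<sigma>) (y \<sigma>) \<le> \<rho>" if "\<sigma> \<in> {0..s}" for \<sigma>
        using elim s \<phi> that by (force simp: dist_norm)+
      have "\<bar>f (\<phi> s) - f (\<phi> 0) * exp (integral {0..s} (\<lambda>\<sigma>. k (y \<sigma>)))\<bar> \<le> \<omega> * \<bar>f (\<phi> 0)\<bar> * s * exp (2 * K * s)"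
      proof (rule cofactor_comparison[OF f k conjunct1[OF \<phi>]])
        show "\<bar>k (\<phi> \<sigma>)\<bar> \<le> K" "\<bar>k (y \<sigma>)\<bar> \<le> K" if "\<sigma> \<in> {0..s}" for \<sigma>
          using K[of "y \<sigma>" "\<phi> \<sigma>"] K[of "y \<sigma>" "y \<sigma>"] near[OF that] r by (auto simp: dist_commute)
        show "\<bar>k (\<phi> \<sigma>) - k (y \<sigma>)\<bar> \<le> \<omega>" if "\<sigma> \<in> {0..s}" for \<sigma>
          using \<rho>(2)[of "y \<sigma>" "\<phi> \<sigma>"] near[OF that] by (simp add: dist_real_def)
      qed (use s r \<omega> in auto)
      also have "\<dots> \<le> \<omega> * \<bar>f q\<bar> * (S * exp (2 * K * S) + 1)"
      proof -
        have "s * exp (2 * K * s) \<le> S * exp (2 * K * S)"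
          using s r by (intro mult_mono) (auto intro: mult_left_mono)
        then show ?thesis
          using \<phi> \<omega> by (simp add: mult.assoc mult_left_mono)
      qed
      also have "\<dots> = \<epsilon> * \<bar>f q\<bar>"
      proof -
        have "S * exp (2 * K * S) + 1 > 0"
          using S by (simp add: add_nonneg_pos)
        then show ?thesis
          unfolding \<omega>_def by simp
      qed
      finally show "\<bar>f (\<phi> s) - f q * exp (integral {0..s} (\<lambda>\<sigma>. k (y \<sigma>)))\<bar> \<le> \<epsilon> * \<bar>f q\<bar>"
        using \<phi> by simp
    qed
  qed
qed

lemma cofactor_return_has_derivative:
  fixes f k :: "'a \<Rightarrow> real"
  assumes f: "\<And>x. x \<in> U \<Longrightarrow> (f has_derivative f' x) (at x)" "\<And>x. x \<in> U \<Longrightarrow> f' x (F x) = k x * f x"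
      "f (y 0) = 0"
    and k: "continuous_on U k"
  shows "((\<lambda>q. f (R q)) has_derivative (\<lambda>h. exp (integral {0..T} (\<lambda>s. k (y s))) * f' (y 0) h)) (at (y 0))"
proof -
  define \<kappa> where "\<kappa> s = integral {0..s} (\<lambda>\<sigma>. k (y \<sigma>))" for s
  have "(\<kappa> has_real_derivative k (y T)) (at T within {0..T + 1})"
    unfolding \<kappa>_def using orbit_integral_has_derivative[OF k, of T "T + 1"] period_pos by simp
  moreover have "T \<in> interior {0..T + 1}"
    using period_pos by simp
  ultimately have "isCont \<kappa> T"
    by (metis DERIV_isCont at_within_interior)
  then have "isCont (\<lambda>q. \<kappa> (\<tau> q)) (y 0)"
    using isCont_o2[OF return_time(1)] return_time(2) by simp
  then have "isCont (\<lambda>q. exp (\<kappa> (\<tau> q))) (y 0)"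
    by (intro continuous_intros)
  \<comment> \<open>since \<open>f\<close> vanishes at \<open>y 0\<close>, only the value \<open>exp (\<kappa> T)\<close> of the factor enters the derivative\<close>
  from has_derivative_scaleR_vanishing[OF f(1)[OF orbit_in_domain] f(3) this]
  have g: "((\<lambda>q. exp (\<kappa> (\<tau> q)) * f q) has_derivative (\<lambda>h. exp (\<kappa> T) * f' (y 0) h)) (at (y 0))"
    using return_time(2) by simp
  show ?thesis
    unfolding \<kappa>_def[symmetric]
  proof (rule has_derivative_first_order_contact[OF g])
    show "f (R (y 0)) = exp (\<kappa> (\<tau> (y 0))) * f (y 0)"
      using return_map_fixed f(3) by simp
    fix \<epsilon> :: real assume \<epsilon>: "\<epsilon> > 0"
    obtain C where C: "C > 0" "\<forall>\<^sub>F q in nhds (y 0). norm (f q - f (y 0)) \<le> C * norm (q - y 0)"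
      using has_derivative_increment_bound[OF f(1)[OF orbit_in_domain]] by blast
    have "\<forall>\<^sub>F q in nhds (y 0). \<forall>s\<in>{0..T + 1}. \<forall>\<phi>. solves_on \<phi> s \<and> \<phi> 0 = q \<longrightarrow>
        \<bar>f (\<phi> s) - f q * exp (\<kappa> s)\<bar> \<le> \<epsilon> / C * \<bar>f q\<bar>"
      unfolding \<kappa>_def using cofactor_along_nearby_solutions[OF f(1,2) k, of "T + 1" "\<epsilon> / C"] period_pos \<epsilon> C(1)
      by simp
    with C(2) eventually_return_time[of "T + 1", simplified] return_along_solutions
    have "\<forall>\<^sub>F q in nhds (y 0). norm (f (R q) - exp (\<kappa> (\<tau> q)) * f q) \<le> \<epsilon> * norm (q - y 0)"
    proof eventually_elim
      case (elim q)
      then obtain \<phi> where \<phi>: "solves_on \<phi> (\<tau> q)" "\<phi> 0 = q" "R q = \<phi> (\<tau> q)" "\<tau> q \<in> {0..T + 1}"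
        by auto
      then have "\<bar>f (R q) - exp (\<kappa> (\<tau> q)) * f q\<bar> \<le> \<epsilon> / C * \<bar>f q\<bar>"
        using elim by (simp add: mult.commute)
      also have "\<dots> \<le> \<epsilon> / C * (C * norm (q - y 0))"
        using elim f(3) \<epsilon> C(1) by (intro mult_left_mono) auto
      finally show ?case
        using C(1) by simp
    qed
    then show "\<forall>\<^sub>F q in at (y 0). norm (f (R q) - exp (\<kappa> (\<tau> q)) * f q) \<le> \<epsilon> * norm (q - y 0)"
      by (simp add: eventually_nhds_conv_at)
  qed
qed

theorem cofactor_return_map_derivative:
  fixes f k :: "'a \<Rightarrow> real" and M :: "real \<Rightarrow> 'a \<Rightarrow>\<^sub>L 'a"
  assumes \<tau>': "(\<tau> has_derivative \<tau>') (at (y 0))" and S: "T < S"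
    and M: "\<And>h s. s \<in> {0..S} \<Longrightarrow>
        ((\<lambda>s. M s h) has_vector_derivative F' (y s) (M s h)) (at s within {0..S})"
      "\<And>h. M 0 h = h" "continuous_on {0..S} M"
    and f: "\<And>x. x \<in> U \<Longrightarrow> (f has_derivative f' x) (at x)" "\<And>x. x \<in> U \<Longrightarrow> f' x (F x) = k x * f x"
      "f (y 0) = 0"
    and k: "continuous_on U k"
  shows "R differentiable at (y 0)"
    and "f' (y 0) (frechet_derivative R (at (y 0)) h) = exp (integral {0..T} (\<lambda>s. k (y s))) * f' (y 0) h"
proof -
  have DR: "(R has_derivative (\<lambda>h. M T h + \<tau>' h *\<^sub>R F (y 0))) (at (y 0))"
    using \<tau>' S M by (rule return_map_has_derivative)
  then show "R differentiable at (y 0)"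
    by (rule differentiableI)
  have "(f has_derivative f' (y 0)) (at (R (y 0)))"
    using f(1)[OF orbit_in_domain] return_map_fixed by simp
  from has_derivative_compose[OF DR this]
  have "((\<lambda>q. f (R q)) has_derivative (\<lambda>h. f' (y 0) (M T h + \<tau>' h *\<^sub>R F (y 0)))) (at (y 0))" .
  from has_derivative_unique[OF this cofactor_return_has_derivative[OF f k]]
  show "f' (y 0) (frechet_derivative R (at (y 0)) h) = exp (integral {0..T} (\<lambda>s. k (y s))) * f' (y 0) h"
    using frechet_derivative_at[OF DR] by metis
qed

end

section \<open>Planar fields and their flows\<close>

definition rot90 :: "real^2 \<Rightarrow> real^2" where
  "rot90 z = (\<chi> i. if i = 1 then - z $ 2 else z $ 1)"

lemma rot90_components [simp]: "rot90 z $ 1 = - z $ 2" "rot90 z $ 2 = z $ 1"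
  by (simp_all add: rot90_def)

lemma bounded_linear_rot90: "bounded_linear rot90"
  by (intro linear_conv_bounded_linear[THEN iffD1] linearI) (auto simp: vec_eq_iff forall_2)

lemma rot90_basis_decomposition:
  assumes "v \<noteq> 0"
  shows "z = ((z \<bullet> v) / (v \<bullet> v)) *\<^sub>R v + ((z \<bullet> rot90 v) / (v \<bullet> v)) *\<^sub>R rot90 v"
proof -
  have "(z \<bullet> v) * v$1 - (z \<bullet> rot90 v) * v$2 = (v \<bullet> v) * z$1"
    "(z \<bullet> v) * v$2 + (z \<bullet> rot90 v) * v$1 = (v \<bullet> v) * z$2"
    by (simp_all add: inner_vec_def sum_2 algebra_simps)
  moreover have "v \<bullet> v \<noteq> 0"
    using assms by simp
  ultimately show ?thesis
    by (simp add: vec_eq_iff forall_2 field_simps)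
qed

lemma variational_second_solution_2d:
  fixes A :: "real \<Rightarrow> (real^2) \<Rightarrow>\<^sub>L (real^2)" and v :: "real \<Rightarrow> real^2"
  assumes A: "continuous_on {0..S} A"
    and v: "\<And>s. s \<in> {0..S} \<Longrightarrow> (v has_vector_derivative A s (v s)) (at s within {0..S})"
    and v_nonzero: "\<And>s. s \<in> {0..S} \<Longrightarrow> v s \<noteq> 0"
  obtains w where "\<And>s. s \<in> {0..S} \<Longrightarrow> (w has_vector_derivative A s (w s)) (at s within {0..S})"
    "w 0 = rot90 (v 0)"
proof -
  have v_cont: "continuous_on {0..S} v"
    using v by (rule continuous_on_vector_derivative)
  \<comment> \<open>variation of constants in the moving frame \<open>(v, rot90 v)\<close>: \<open>w = \<alpha> v + \<beta> rot90 v\<close> with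
    \<open>\<beta>' = c\<^sub>2 \<beta>\<close> and \<open>\<alpha>' = c\<^sub>1 \<beta>\<close>, where \<open>c\<^sub>1 v + c\<^sub>2 rot90 v = A (rot90 v) - rot90 (A v)\<close>\<close>
  define Z where "Z s = A s (rot90 (v s)) - rot90 (A s (v s))" for s
  define c\<^sub>1 where "c\<^sub>1 s = (Z s \<bullet> v s) / (v s \<bullet> v s)" for s
  define c\<^sub>2 where "c\<^sub>2 s = (Z s \<bullet> rot90 (v s)) / (v s \<bullet> v s)" for s
  have Z_cont: "continuous_on {0..S} Z"
    unfolding Z_def
    by (intro continuous_intros A v_cont bounded_linear.continuous_on[OF bounded_linear_rot90])
  have c_cont: "continuous_on {0..S} c\<^sub>1" "continuous_on {0..S} c\<^sub>2"
    unfolding c\<^sub>1_def c\<^sub>2_def using v_nonzero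
    by (intro continuous_intros Z_cont v_cont bounded_linear.continuous_on[OF bounded_linear_rot90]; simp)+
  define \<beta> where "\<beta> s = exp (integral {0..s} c\<^sub>2)" for s
  have \<beta>: "(\<beta> has_real_derivative \<beta> s * c\<^sub>2 s) (at s within {0..S})" if "s \<in> {0..S}" for s
  proof -
    have "((\<lambda>u. integral {0..u} c\<^sub>2) has_real_derivative c\<^sub>2 s) (at s within {0..S})"
      unfolding has_real_derivative_iff_has_vector_derivative
      using integral_has_vector_derivative[OF c_cont(2) that] .
    from DERIV_chain2[OF DERIV_exp this] show ?thesis
      unfolding \<beta>_def by simp
  qed
  have \<beta>_cont: "continuous_on {0..S} \<beta>"
    using \<beta> unfolding has_real_derivative_iff_has_vector_derivative
    by (rule continuous_on_vector_derivative)
  define \<alpha> where "\<alpha> s = integral {0..s} (\<lambda>\<sigma>. c\<^sub>1 \<sigma> * \<beta> \<sigma>)" for s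
  have \<alpha>: "(\<alpha> has_real_derivative c\<^sub>1 s * \<beta> s) (at s within {0..S})" if "s \<in> {0..S}" for s
    unfolding has_real_derivative_iff_has_vector_derivative \<alpha>_def
    using c_cont(1) \<beta>_cont that by (intro integral_has_vector_derivative continuous_intros)
  define w where "w s = \<alpha> s *\<^sub>R v s + \<beta> s *\<^sub>R rot90 (v s)" for s
  show ?thesis
  proof
    fix s assume s: "s \<in> {0..S}"
    have rot: "((\<lambda>s. rot90 (v s)) has_vector_derivative rot90 (A s (v s))) (at s within {0..S})"
      by (rule bounded_linear.has_vector_derivative[OF bounded_linear_rot90 v[OF s]])
    have "(w has_vector_derivative (\<alpha> s *\<^sub>R A s (v s) + (c\<^sub>1 s * \<beta> s) *\<^sub>R v s) +
        (\<beta> s *\<^sub>R rot90 (A s (v s)) + (\<beta> s * c\<^sub>2 s) *\<^sub>R rot90 (v s))) (at s within {0..S})"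
      unfolding w_def
      by (intro has_vector_derivative_add has_vector_derivative_scaleR \<alpha>[OF s] \<beta>[OF s] v[OF s] rot)
    moreover have "A s (rot90 (v s)) = c\<^sub>1 s *\<^sub>R v s + c\<^sub>2 s *\<^sub>R rot90 (v s) + rot90 (A s (v s))"
      using rot90_basis_decomposition[OF v_nonzero[OF s], of "Z s"]
      unfolding c\<^sub>1_def c\<^sub>2_def Z_def by (simp add: algebra_simps)
    ultimately show "(w has_vector_derivative A s (w s)) (at s within {0..S})"
      unfolding w_def by (simp add: blinfun.add_right blinfun.scaleR_right algebra_simps)
  next
    show "w 0 = rot90 (v 0)"
      unfolding w_def \<alpha>_def \<beta>_def by simp
  qed
qed

lemma variational_fundamental_solution_2d:
  fixes A :: "real \<Rightarrow> (real^2) \<Rightarrow>\<^sub>L (real^2)" and v :: "real \<Rightarrow> real^2"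
  assumes A: "continuous_on {0..S} A"
    and v: "\<And>s. s \<in> {0..S} \<Longrightarrow> (v has_vector_derivative A s (v s)) (at s within {0..S})"
    and v_nonzero: "\<And>s. s \<in> {0..S} \<Longrightarrow> v s \<noteq> 0" and S: "0 \<le> S"
  obtains M :: "real \<Rightarrow> (real^2) \<Rightarrow>\<^sub>L (real^2)"
  where "\<And>h s. s \<in> {0..S} \<Longrightarrow> ((\<lambda>s. M s h) has_vector_derivative A s (M s h)) (at s within {0..S})"
    "\<And>h. M 0 h = h" "continuous_on {0..S} M"
proof -
  obtain w where w: "\<And>s. s \<in> {0..S} \<Longrightarrow> (w has_vector_derivative A s (w s)) (at s within {0..S})"
    and w0: "w 0 = rot90 (v 0)"
    using variational_second_solution_2d[OF A v v_nonzero] by blast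
  define a where "a = v 0 /\<^sub>R (v 0 \<bullet> v 0)"
  define b where "b = rot90 (v 0) /\<^sub>R (v 0 \<bullet> v 0)"
  define M where "M s = (blinfun_scaleR_left (v s) o\<^sub>L blinfun_inner_left a)
    + (blinfun_scaleR_left (w s) o\<^sub>L blinfun_inner_left b)" for s
  have M_apply: "M s h = (h \<bullet> a) *\<^sub>R v s + (h \<bullet> b) *\<^sub>R w s" for s h
    by (simp add: M_def plus_blinfun.rep_eq)
  show ?thesis
  proof
    fix h s assume s: "s \<in> {0..S}"
    have "((\<lambda>s. M s h) has_vector_derivative (h \<bullet> a) *\<^sub>R A s (v s) + (h \<bullet> b) *\<^sub>R A s (w s))
        (at s within {0..S})"
      unfolding M_apply
      by (intro has_vector_derivative_add bounded_linear.has_vector_derivative[OF bounded_linear_scaleR_right]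
          v[OF s] w[OF s])
    then show "((\<lambda>s. M s h) has_vector_derivative A s (M s h)) (at s within {0..S})"
      by (simp add: M_apply blinfun.add_right blinfun.scaleR_right)
  next
    fix h
    have "v 0 \<noteq> 0"
      using v_nonzero S by simp
    from rot90_basis_decomposition[OF this, of h] show "M 0 h = h"
      by (simp add: M_apply w0 a_def b_def divide_inverse_commute)
  next
    have "continuous_on {0..S} v"
      using v by (rule continuous_on_vector_derivative)
    moreover have "continuous_on {0..S} w"
      using w by (rule continuous_on_vector_derivative)
    ultimately show "continuous_on {0..S} M"
      unfolding M_def by (intro continuous_intros)
  qed
qed

lemma flow_eq_solution:
  fixes U :: "(real^2) set"
  assumes "c1_vector_field U F F'" and "flow_defined U F s q" and s: "0 \<le> s"
  shows "\<exists>\<phi>. c1_vector_field.solves_on U F \<phi> s \<and> \<phi> 0 = q \<and> flow U F s q = \<phi> s"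
proof -
  interpret c1_vector_field U F F' by fact
  have restrict: "solves_on \<phi> s" if I: "0 \<in> I" "s \<in> I" and \<phi>: "ode_sol U F \<phi> I" for \<phi> I
  proof -
    have "{0..s} \<subseteq> I"
      using I \<phi> unfolding ode_sol_def by (auto intro: mem_is_interval_1_I)
    with \<phi> show ?thesis
      unfolding ode_sol_def solves_on_def by (auto intro: has_vector_derivative_within_subset)
  qed
  obtain \<phi> I where \<phi>: "0 \<in> I" "s \<in> I" "ode_sol U F \<phi> I" "\<phi> 0 = q"
    using assms(2) unfolding flow_defined_def by blast
  have "flow U F s q = \<phi> s"
    unfolding flow_def
  proof (rule the_equality)
    show "\<exists>\<phi>' I'. 0 \<in> I' \<and> s \<in> I' \<and> ode_sol U F \<phi>' I' \<and> \<phi>' 0 = q \<and> \<phi>' s = \<phi> s"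
      using \<phi> by blast
    fix z assume "\<exists>\<phi>' I'. 0 \<in> I' \<and> s \<in> I' \<and> ode_sol U F \<phi>' I' \<and> \<phi>' 0 = q \<and> \<phi>' s = z"
    then obtain \<phi>' I' where \<phi>': "0 \<in> I'" "s \<in> I'" "ode_sol U F \<phi>' I'" "\<phi>' 0 = q" "\<phi>' s = z"
      by blast
    show "z = \<phi> s"
      using solves_on_unique[OF restrict[OF \<phi>'(1-3)] restrict[OF \<phi>(1-3)]] \<phi>'(4,5) \<phi>(4) s by simp
  qed
  then show ?thesis
    using restrict[OF \<phi>(1-3)] \<phi>(4) by blast
qed

lemma ode_sol_UNIV_shift:
  assumes "ode_sol U F \<gamma> UNIV"
  shows "\<gamma> (t + s) \<in> U" "((\<lambda>s. \<gamma> (t + s)) has_vector_derivative F (\<gamma> (t + s))) (at s)"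
proof -
  have "((\<lambda>s. t + s) has_vector_derivative 1) (at s)"
    by (auto intro!: derivative_eq_intros simp: has_real_derivative_iff_has_vector_derivative[symmetric])
  moreover have "(\<gamma> has_vector_derivative F (\<gamma> (t + s))) (at (t + s))"
    using assms unfolding ode_sol_def by simp
  ultimately show "((\<lambda>s. \<gamma> (t + s)) has_vector_derivative F (\<gamma> (t + s))) (at s)"
    using vector_diff_chain_at by (fastforce simp: o_def)
  show "\<gamma> (t + s) \<in> U"
    using assms unfolding ode_sol_def by simp
qed

lemma periodic_orbit_return_map:
  fixes U :: "(real^2) set"
  assumes field: "c1_vector_field U F F'"
    and \<gamma>: "ode_sol U F \<gamma> UNIV" "T > 0" "\<And>s. \<gamma> (s + T) = \<gamma> s"
    and \<tau>: "continuous (at (\<gamma> t)) \<tau>" "\<tau> (\<gamma> t) = T"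
    and defined: "\<forall>\<^sub>F q in nhds (\<gamma> t). flow_defined U F (\<tau> q) q"
  shows "return_map U F F' (\<lambda>s. \<gamma> (t + s)) T \<tau> (\<lambda>q. flow U F (\<tau> q) q)"
proof -
  have "\<forall>\<^sub>F q in nhds (\<gamma> t). \<tau> q > 0"
    using \<tau> \<open>T > 0\<close> unfolding continuous_at
    by (simp add: eventually_nhds_conv_at order_tendstoD(1))
  with defined have "\<forall>\<^sub>F q in nhds (\<gamma> t). \<exists>\<phi>. c1_vector_field.solves_on U F \<phi> (\<tau> q) \<and> \<phi> 0 = q \<and>
      flow U F (\<tau> q) q = \<phi> (\<tau> q)"
    by eventually_elim (use flow_eq_solution[OF field] in force)
  moreover have "\<gamma> (t + T) = \<gamma> t"
    using \<gamma>(3)[of t] by (simp add: add.commute)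
  ultimately show ?thesis
    using field ode_sol_UNIV_shift[OF \<gamma>(1)] \<gamma>(2) \<tau>
    unfolding return_map_def return_map_axioms_def by simp
qed

lemma vfield_eq: "vfield P Q p = P p *\<^sub>R axis 1 1 + Q p *\<^sub>R axis 2 1"
  by (simp add: vfield_def vec_eq_iff forall_2 axis_def)

lemma c1_vector_field_vfield:
  assumes "open U" "C1_on U P" "C1_on U Q"
  obtains F' where "c1_vector_field U (vfield P Q) F'"
proof -
  obtain P' where P': "\<And>x. x \<in> U \<Longrightarrow> (P has_derivative blinfun_apply (P' x)) (at x)" "continuous_on U P'"
    using assms(2) unfolding C1_on_def by blast
  obtain Q' where Q': "\<And>x. x \<in> U \<Longrightarrow> (Q has_derivative blinfun_apply (Q' x)) (at x)" "continuous_on U Q'"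
    using assms(3) unfolding C1_on_def by blast
  define F' :: "real^2 \<Rightarrow> (real^2) \<Rightarrow>\<^sub>L (real^2)"
    where "F' x = (blinfun_scaleR_left (axis 1 1) o\<^sub>L P' x) + (blinfun_scaleR_left (axis 2 1) o\<^sub>L Q' x)"
    for x
  have "c1_vector_field U (vfield P Q) F'"
  proof
    show "(vfield P Q has_derivative blinfun_apply (F' x)) (at x)" if "x \<in> U" for x
      unfolding vfield_eq[abs_def] F'_def using P'(1)[OF that] Q'(1)[OF that]
      by (auto intro!: derivative_eq_intros simp: plus_blinfun.rep_eq)
    show "continuous_on U F'"
      unfolding F'_def by (intro continuous_intros P'(2) Q'(2))
  qed fact
  then show ?thesis
    by (rule that)
qed

lemma directional_derivative_vfield:
  assumes "(f has_derivative f') (at p)"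
  shows "f' (vfield P Q p) = P p * partial 1 f p + Q p * partial 2 f p"
  using frechet_derivative_at[OF assms] linear_add[OF has_derivative_linear[OF assms]]
    linear_scale[OF has_derivative_linear[OF assms]]
  by (simp add: vfield_eq partial_def)

lemma grad_eq_derivative:
  assumes "(f has_derivative f') (at p)"
  shows "grad f p = (\<chi> i. f' (axis i 1))"
  unfolding grad_def partial_def using frechet_derivative_at[OF assms] by simp

lemma row_vector_matrix_eigen:
  fixes L :: "real^'n \<Rightarrow> real^'n" and D :: "real^'n \<Rightarrow> real"
  assumes L: "linear L" and D: "linear D" and eigen: "\<And>h. D (L h) = c * D h"
  shows "(\<chi> i. D (axis i 1)) v* matrix L = c *s (\<chi> i. D (axis i 1))"
proof -
  have D_inner: "D x = (\<chi> i. D (axis i 1)) \<bullet> x" for x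
  proof -
    have "D x = D (\<Sum>i\<in>UNIV. x $ i *\<^sub>R axis i 1)"
      using basis_expansion[of x] by (simp add: scalar_mult_eq_scaleR)
    also have "\<dots> = (\<Sum>i\<in>UNIV. x $ i * D (axis i 1))"
      using D by (simp add: linear_sum linear_scale)
    finally show ?thesis
      by (simp add: inner_vec_def mult.commute)
  qed
  show ?thesis
  proof (subst vec_eq_iff, intro allI)
    fix j
    have "((\<chi> i. D (axis i 1)) v* matrix L) $ j = (\<chi> i. D (axis i 1)) \<bullet> L (axis j 1)"
      by (simp add: vector_matrix_mult_def matrix_def inner_vec_def mult.commute)
    also have "\<dots> = c * D (axis j 1)"
      using eigen by (simp add: D_inner[symmetric])
    finally show "((\<chi> i. D (axis i 1)) v* matrix L) $ j = (c *s (\<chi> i. D (axis i 1))) $ j"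
      by simp
  qed
qed

theorem planar_cofactor_return_map_gradient:
  fixes U :: "(real^2) set" and f k :: "real^2 \<Rightarrow> real"
  assumes "return_map U F F' y T \<tau> R"
    and nonsingular: "\<And>s. F (y s) \<noteq> 0"
    and \<tau>: "\<tau> differentiable at (y 0)"
    and f: "\<And>x. x \<in> U \<Longrightarrow> (f has_derivative f' x) (at x)" "\<And>x. x \<in> U \<Longrightarrow> f' x (F x) = k x * f x"
      "f (y 0) = 0"
    and k: "continuous_on U k"
  shows "R differentiable at (y 0)"
    and "(\<chi> i. f' (y 0) (axis i 1)) v* matrix (frechet_derivative R (at (y 0)))
           = exp (integral {0..T} (\<lambda>s. k (y s))) *s (\<chi> i. f' (y 0) (axis i 1))"
proof -
  interpret return_map U F F' y T \<tau> R by fact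
  obtain \<tau>' where \<tau>': "(\<tau> has_derivative \<tau>') (at (y 0))"
    using \<tau> by (auto simp: differentiable_def)
  obtain M :: "real \<Rightarrow> (real^2) \<Rightarrow>\<^sub>L (real^2)"
    where M: "\<And>h s. s \<in> {0..T + 1} \<Longrightarrow>
        ((\<lambda>s. M s h) has_vector_derivative F' (y s) (M s h)) (at s within {0..T + 1})"
      "\<And>h. M 0 h = h" "continuous_on {0..T + 1} M"
  proof (rule variational_fundamental_solution_2d[of "T + 1" "\<lambda>s. F' (y s)" "\<lambda>s. F (y s)"])
    show "continuous_on {0..T + 1} (\<lambda>s. F' (y s))"
      using continuous_on_along_orbit[OF continuous_on_derivative] by (rule continuous_on_subset) simp
    show "((\<lambda>s. F (y s)) has_vector_derivative F' (y s) (F (y s))) (at s within {0..T + 1})" for s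
      using field_along_solution[OF orbit_in_domain has_vector_derivative_at_within[OF orbit_solves]] .
  qed (use nonsingular period_pos in auto)
  note DR = cofactor_return_map_derivative[OF \<tau>' _ M f k]
  show "R differentiable at (y 0)"
    using DR(1) by simp
  then have "linear (frechet_derivative R (at (y 0)))"
    by (meson frechet_derivative_works has_derivative_linear)
  with has_derivative_linear[OF f(1)[OF orbit_in_domain]] DR(2)
  show "(\<chi> i. f' (y 0) (axis i 1)) v* matrix (frechet_derivative R (at (y 0)))
           = exp (integral {0..T} (\<lambda>s. k (y s))) *s (\<chi> i. f' (y 0) (axis i 1))"
    by (intro row_vector_matrix_eigen) simp_all
qed

lemma C1_on_imp_continuous_on: "C1_on U g \<Longrightarrow> continuous_on U g"
  unfolding C1_on_def
  by (meson continuous_at_imp_continuous_on has_derivative_continuous)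

theorem lemma2:
  fixes U U\<gamma> :: "(real^2) set"
    and P Q f k :: "real^2 \<Rightarrow> real"
    and \<gamma> :: "real \<Rightarrow> real^2"
    and T \<delta> :: real
    and p0 :: "real^2"
    and \<tau> :: "real^2 \<Rightarrow> real"
  assumes U_open: "open U"
    and P_C1: "C1_on U P" and Q_C1: "C1_on U Q"
    and gamma_sol: "ode_sol U (vfield P Q) \<gamma> UNIV"
    and T_pos: "T > 0"
    and gamma_per: "\<forall>t. \<gamma> (t + T) = \<gamma> t"
    and gamma_min: "\<forall>s. 0 < s \<and> s < T \<longrightarrow> \<gamma> s \<noteq> \<gamma> 0"
    and f_C1: "C1_on U f" and f_nln: "non_locally_null U f"
    and k_C1: "C1_on U k"
    and inv: "\<forall>p\<in>U. P p * partial 1 f p + Q p * partial 2 f p = k p * f p"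
    and gamma_zero: "\<forall>t. f (\<gamma> t) = 0"
    and p0_on: "p0 \<in> range \<gamma>"
    and Ug_open: "open U\<gamma>" and Ug_sub: "U\<gamma> \<subseteq> U" and Ug_gamma: "range \<gamma> \<subseteq> U\<gamma>"
    and Ug_nonsing: "\<forall>q\<in>U\<gamma>. vfield P Q q \<noteq> 0"
    and delta_pos: "\<delta> > 0"
    and tau_C1: "C1_on (ball p0 \<delta>) \<tau>"
    and tau_p0: "\<tau> p0 = T"
    and tau_sec: "\<forall>q\<in>ball p0 \<delta>. flow_defined U (vfield P Q) (\<tau> q) q \<and>
                   flow U (vfield P Q) (\<tau> q) q \<in> {r \<in> U\<gamma>. (r - p0) \<bullet> vfield P Q p0 = 0}"
  shows "(\<lambda>q. flow U (vfield P Q) (\<tau> q) q) differentiable (at p0) \<and>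
         grad f p0 v* matrix (frechet_derivative (\<lambda>q. flow U (vfield P Q) (\<tau> q) q) (at p0))
           = exp (integral {0..T} (\<lambda>t. k (\<gamma> t))) *s grad f p0"
proof -
  \<comment> \<open>not needed: minimality of the period, \<open>non_locally_null U f\<close>, openness of \<open>U\<gamma>\<close>, and
    that the flow at the return time lands on the section\<close>
  obtain F' where field: "c1_vector_field U (vfield P Q) F'"
    using c1_vector_field_vfield[OF U_open P_C1 Q_C1] .
  obtain f' where f': "\<And>x. x \<in> U \<Longrightarrow> (f has_derivative blinfun_apply (f' x)) (at x)"
    using f_C1 unfolding C1_on_def by blast
  obtain t where t: "p0 = \<gamma> t"
    using p0_on by blast
  have \<tau>: "\<tau> differentiable at p0"
    using tau_C1 delta_pos unfolding C1_on_def differentiable_def by force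
  have "\<forall>\<^sub>F q in nhds p0. flow_defined U (vfield P Q) (\<tau> q) q"
    using eventually_nhds_in_open[of "ball p0 \<delta>" p0] tau_sec delta_pos by (auto elim: eventually_mono)
  then have R: "return_map U (vfield P Q) F' (\<lambda>s. \<gamma> (t + s)) T \<tau> (\<lambda>q. flow U (vfield P Q) (\<tau> q) q)"
    using periodic_orbit_return_map[OF field gamma_sol T_pos] gamma_per tau_p0
      differentiable_imp_continuous_within[OF \<tau>] t by simp
  have k: "continuous_on U k"
    using k_C1 by (rule C1_on_imp_continuous_on)
  have "integral {0..T} (\<lambda>s. k (\<gamma> (t + s))) = integral {0..T} (\<lambda>s. k (\<gamma> s))"
    using integral_periodic_shift[of "\<lambda>s. k (\<gamma> (t + s))" T "- t"] gamma_per T_pos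
      return_map.continuous_on_along_orbit[OF R k] by (simp add: add.assoc[symmetric])
  moreover have "grad f p0 = (\<chi> i. f' p0 (axis i 1))"
    using f' t Ug_gamma Ug_sub by (metis grad_eq_derivative rangeI subsetD)
  moreover have "\<And>s. vfield P Q (\<gamma> (t + s)) \<noteq> 0"
    using Ug_nonsing Ug_gamma by auto
  moreover have "\<And>x. x \<in> U \<Longrightarrow> f' x (vfield P Q x) = k x * f x"
    using directional_derivative_vfield[OF f'] inv by simp
  ultimately show ?thesis
    using planar_cofactor_return_map_gradient[OF R _ _ f' _ _ k] \<tau> t gamma_zero by simp
qed

end
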